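(* Let $G$ be a graph on $n$ vertices with $\mu(G)<\delta(G)$. Then $n\ge 2\delta(G)-3$. If moreover $n=2\delta(G)-3$, then $\mu(G)=\delta(G)-1$.
   Context: All graphs are finite and simple; $\delta(G)$ is the minimum degree. For a graph $G=(V,E)$ on $n$ vertices, a fractional vertex cover is a function $f:V\to[0,\infty)$ with $f(u)+f(v)\ge 1$ for every edge $uv\in E$; $\tau^*(G)$ denotes the minimum of $\sum_{v\in V}f(v)$ over all fractional vertex covers. For $E'\subseteq E$ let $G-E'=(V,E\setminus E')$. Define $\mu(G)=\min\{|E'| : E'\subseteq E,\ \tau^*(G-E')<n/2\}$. *)

theory Defs
  imports Complex_Main
begin

definition graph :: "'a set \<Rightarrow> 'a set set \<Rightarrow> bool" where
  "graph V E \<longleftrightarrow> finite V \<and> (\<forall>e\<in>E. e \<subseteq> V \<and> card e = 2)"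

definition degree :: "'a set set \<Rightarrow> 'a \<Rightarrow> nat" where
  "degree E v = card {e \<in> E. v \<in> e}"

text \<open>Minimum degree (meaningful for nonempty V).\<close>
definition min_degree :: "'a set \<Rightarrow> 'a set set \<Rightarrow> nat" where
  "min_degree V E = Min (degree E ` V)"

definition frac_vertex_cover :: "'a set \<Rightarrow> 'a set set \<Rightarrow> ('a \<Rightarrow> real) \<Rightarrow> bool" where
  "frac_vertex_cover V E f \<longleftrightarrow>
     (\<forall>v\<in>V. f v \<ge> 0) \<and> (\<forall>u v. {u, v} \<in> E \<longrightarrow> f u + f v \<ge> 1)"

text \<open>Fractional vertex cover number (the minimum exists by LP theory; we take the infimum).\<close>
definition tau_star :: "'a set \<Rightarrow> 'a set set \<Rightarrow> real" where
  "tau_star V E = Inf {(\<Sum>v\<in>V. f v) | f. frac_vertex_cover V E f}"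

definition mu :: "'a set \<Rightarrow> 'a set set \<Rightarrow> nat" where
  "mu V E = (LEAST k. \<exists>E'. E' \<subseteq> E \<and> card E' = k \<and> tau_star V (E - E') < real (card V) / 2)"

end

theory Submission
  imports Defs
begin

text \<open>
  Delete a set \<open>E'\<close> of \<open>\<mu>(G)\<close> edges so that \<open>G - E'\<close> has a fractional vertex cover \<open>f\<close> of
  total weight below \<open>n/2\<close>. Then for some \<open>y \<ge> 1/2\<close> there are more light vertices
  (\<open>f < 1 - y\<close>) than heavy ones (\<open>f > y\<close>): otherwise every vertex below \<open>1/2\<close> could be
  paired with a distinct vertex at least as far above \<open>1/2\<close>, and the total weight would be at
  least \<open>n/2\<close>. Every remaining edge at a light vertex ends in a heavy vertex, so with \<open>s\<close> light
  and \<open>t < s\<close> heavy vertices each light vertex lies on at least \<open>\<delta> - t\<close> deleted edges.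
  Counting these edges gives \<open>s(\<delta> - t) \<le> 2\<mu>\<close> and \<open>s(\<delta> - t) \<le> \<mu> + s(s - 1)/2\<close>, which
  together with \<open>\<mu> < \<delta>\<close> force \<open>s + t \<ge> 2\<delta> - 3\<close>, with equality only if \<open>\<mu> = \<delta> - 1\<close>.
\<close>

lemma sum_nonneg_if_lower_tails_le_upper_tails:
  fixes g :: "'a \<Rightarrow> real"
  assumes "finite V"
    and "\<And>x. 0 \<le> x \<Longrightarrow> card {v\<in>V. g v < -x} \<le> card {v\<in>V. x < g v}"
  shows "0 \<le> sum g V"
  using assms
proof (induction "card V" arbitrary: V rule: less_induct)
  case less
  note tails = less.prems(2)
  show ?case
  proof (cases "\<forall>v\<in>V. 0 \<le> g v")
    case True
    then show ?thesis by (simp add: sum_nonneg)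
  next
    case False
    then have "V \<noteq> {}" by blast
    define a where "a = arg_min_on g V"
    have a: "a \<in> V" "\<And>v. v \<in> V \<Longrightarrow> g a \<le> g v"
      using arg_min_if_finite[OF less.prems(1) \<open>V \<noteq> {}\<close>, of g] unfolding a_def by force+
    have "g a < 0" using False a(2) by force
    have "\<exists>b\<in>V. - g a \<le> g b"
    proof (rule ccontr)
      assume "\<not> (\<exists>b\<in>V. - g a \<le> g b)"
      define x where "x = Max (insert 0 (g ` V))"
      have "0 \<le> x" "x < - g a"
        using less.prems(1) \<open>g a < 0\<close> \<open>\<not> (\<exists>b\<in>V. - g a \<le> g b)\<close>
        by (auto simp: x_def not_le)
      have "{v\<in>V. x < g v} = {}" using less.prems(1) by (auto simp: x_def)
      moreover have "0 < card {v\<in>V. g v < -x}"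
        using a(1) \<open>x < - g a\<close> less.prems(1) by (auto simp: card_gt_0_iff)
      ultimately show False using tails[OF \<open>0 \<le> x\<close>] by (metis card.empty le_zero_eq not_gr0)
    qed
    then obtain b where b: "b \<in> V" "- g a \<le> g b" by blast
    define W where "W = V - {a, b}"
    have "a \<noteq> b" using b(2) \<open>g a < 0\<close> by auto
    have "card W < card V"
      unfolding W_def using a(1) b(1) less.prems(1) by (metis Diff_insert2 card_Diff2_less)
    moreover have "finite W" using less.prems(1) by (simp add: W_def)
    moreover have "card {v\<in>W. g v < -x} \<le> card {v\<in>W. x < g v}" if "0 \<le> x" for x
    proof (cases "x < - g a")
      case True
      have "{v\<in>W. g v < -x} = {v\<in>V. g v < -x} - {a}" "a \<in> {v\<in>V. g v < -x}"
        "{v\<in>W. x < g v} = {v\<in>V. x < g v} - {b}" "b \<in> {v\<in>V. x < g v}"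
        using a(1) b \<open>g a < 0\<close> \<open>0 \<le> x\<close> True by (auto simp: W_def)
      then show ?thesis using tails[OF \<open>0 \<le> x\<close>] less.prems(1) by simp
    next
      case False
      then have "{v\<in>W. g v < -x} = {}" using a(2) by (force simp: W_def)
      then show ?thesis by (metis card.empty zero_le)
    qed
    ultimately have "0 \<le> sum g W" by (rule less.hyps)
    moreover have "sum g V = g a + g b + sum g W"
      using less.prems(1) a(1) b(1) \<open>a \<noteq> b\<close> sum.remove[of V a g] sum.remove[of "V - {a}" b g]
      by (simp add: W_def flip: Diff_insert2)
    ultimately show ?thesis using b(2) by simp
  qed
qed

lemma ex_threshold_light_gt_heavy:
  fixes f :: "'a \<Rightarrow> real"
  assumes "finite V" and "sum f V < card V / 2"
  shows "\<exists>y\<ge>1/2. card {v\<in>V. y < f v} < card {v\<in>V. f v < 1 - y}"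
proof (rule ccontr)
  assume no_threshold: "\<not> ?thesis"
  have "card {v\<in>V. f v - 1/2 < -x} \<le> card {v\<in>V. x < f v - 1/2}" if "0 \<le> x" for x
  proof -
    have "1/2 \<le> 1/2 + x" using that by simp
    then have "\<not> card {v\<in>V. 1/2 + x < f v} < card {v\<in>V. f v < 1 - (1/2 + x)}"
      using no_threshold by blast
    moreover have "{v\<in>V. f v - 1/2 < -x} = {v\<in>V. f v < 1 - (1/2 + x)}"
      and "{v\<in>V. x < f v - 1/2} = {v\<in>V. 1/2 + x < f v}" by auto
    ultimately show ?thesis by (simp only: not_less)
  qed
  then have "0 \<le> (\<Sum>v\<in>V. f v - 1/2)"
    by (rule sum_nonneg_if_lower_tails_le_upper_tails[OF \<open>finite V\<close>])
  then show False using assms(2) by (simp add: sum_subtractf)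
qed

lemma graph_finite_edges: "graph V E \<Longrightarrow> finite E"
  unfolding graph_def by (meson Pow_iff finite_Pow_iff finite_subset subsetI)

lemma graph_subset_edges: "graph V E \<Longrightarrow> E' \<subseteq> E \<Longrightarrow> graph V E'"
  unfolding graph_def by blast

lemma tau_star_no_edges: "tau_star V {} = 0"
  unfolding tau_star_def
  by (rule cInf_eq_minimum) (auto simp: frac_vertex_cover_def intro: exI[of _ "\<lambda>_. 0"] sum_nonneg)

lemma mu_witness:
  assumes "finite V" and "V \<noteq> {}"
  shows "\<exists>E'\<subseteq>E. card E' = mu V E \<and> tau_star V (E - E') < card V / 2"
proof -
  have "tau_star V (E - E) < card V / 2"
    using assms by (simp add: tau_star_no_edges card_gt_0_iff)
  then have "\<exists>k E'. E' \<subseteq> E \<and> card E' = k \<and> tau_star V (E - E') < card V / 2" by blast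
  from LeastI_ex[OF this] show ?thesis unfolding mu_def by blast
qed

lemma ex_frac_vertex_cover_sum_less:
  assumes "tau_star V E < c"
  shows "\<exists>f. frac_vertex_cover V E f \<and> sum f V < c"
proof -
  have "frac_vertex_cover V E (\<lambda>_. 1)" by (simp add: frac_vertex_cover_def)
  then have "{sum f V | f. frac_vertex_cover V E f} \<noteq> {}" by blast
  from cInf_lessD[OF this] show ?thesis using assms unfolding tau_star_def by blast
qed

lemma degree_diff_add:
  assumes "finite E" and "E' \<subseteq> E"
  shows "degree E v = degree (E - E') v + degree E' v"
proof -
  have "{e\<in>E. v \<in> e} = {e\<in>E - E'. v \<in> e} \<union> {e\<in>E'. v \<in> e}" using assms(2) by blast
  then show ?thesis
    unfolding degree_def using assms by (simp add: card_Un_disjoint finite_subset Int_def)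
qed

lemma degree_le_card_heavy:
  assumes "graph V E" and "frac_vertex_cover V E f" and "f v < 1 - y"
  shows "degree E v \<le> card {w\<in>V. y < f w}"
proof -
  have "{e\<in>E. v \<in> e} \<subseteq> (\<lambda>w. {v, w}) ` {w\<in>V. y < f w}"
  proof
    fix e assume e: "e \<in> {e\<in>E. v \<in> e}"
    then have "card e = 2" using assms(1) by (simp add: graph_def)
    then obtain w where w: "e = {v, w}"
      using e by (force simp: card_2_iff insert_commute)
    then have "w \<in> V" "1 \<le> f v + f w"
      using assms(1,2) e by (auto simp: graph_def frac_vertex_cover_def)
    then show "e \<in> (\<lambda>w. {v, w}) ` {w\<in>V. y < f w}" using w assms(3) by auto
  qed
  then have "degree E v \<le> card ((\<lambda>w. {v, w}) ` {w\<in>V. y < f w})"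
    unfolding degree_def using assms(1) by (intro card_mono) (auto simp: graph_def)
  also have "\<dots> \<le> card {w\<in>V. y < f w}" by (rule card_image_le) (use assms(1) in \<open>simp add: graph_def\<close>)
  finally show ?thesis .
qed

lemma sum_degree_eq_sum_card_inter:
  assumes "finite E" and "finite S"
  shows "(\<Sum>v\<in>S. degree E v) = (\<Sum>e\<in>E. card (e \<inter> S))"
proof -
  have "(\<Sum>v\<in>S. degree E v) = (\<Sum>v\<in>S. \<Sum>e\<in>E. if v \<in> e then 1 else 0)"
    unfolding degree_def using assms by (simp add: sum.inter_filter[symmetric])
  also have "\<dots> = (\<Sum>e\<in>E. \<Sum>v\<in>S. if v \<in> e then 1 else 0)" by (rule sum.swap)
  also have "\<dots> = (\<Sum>e\<in>E. card (e \<inter> S))"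
    using assms by (simp add: sum.inter_filter[symmetric] Int_def conj_commute)
  finally show ?thesis .
qed

lemma sum_degree_le_twice_card_edges:
  assumes "graph V E" and "finite S"
  shows "(\<Sum>v\<in>S. degree E v) \<le> 2 * card E"
proof -
  have "card (e \<inter> S) \<le> 2" if "e \<in> E" for e
    using assms(1) that card_mono[of e "e \<inter> S"] by (force simp: graph_def card_2_iff)
  then have "(\<Sum>e\<in>E. card (e \<inter> S)) \<le> (\<Sum>e\<in>E. 2)" by (rule sum_mono)
  then show ?thesis
    using assms by (simp add: sum_degree_eq_sum_card_inter graph_finite_edges)
qed

lemma sum_degree_le_card_edges_add_choose:
  assumes "graph V E" and "finite S"
  shows "(\<Sum>v\<in>S. degree E v) \<le> card E + (card S choose 2)"
proof -
  have finE: "finite E" using assms(1) by (rule graph_finite_edges)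
  have "card (e \<inter> S) \<le> 1 + (if e \<subseteq> S then 1 else 0)" if "e \<in> E" for e
  proof -
    have "card e = 2" "finite e" using assms(1) that by (auto simp: graph_def card_2_iff)
    then show ?thesis using psubset_card_mono[of e "e \<inter> S"] card_mono[of e "e \<inter> S"] by force
  qed
  then have "(\<Sum>e\<in>E. card (e \<inter> S)) \<le> (\<Sum>e\<in>E. 1 + (if e \<subseteq> S then 1 else 0))" by (rule sum_mono)
  also have "\<dots> = card E + card {e\<in>E. e \<subseteq> S}"
    using finE by (simp only: sum.distrib) (simp add: sum.inter_filter[symmetric])
  also have "card {e\<in>E. e \<subseteq> S} \<le> card {A. A \<subseteq> S \<and> card A = 2}"
    using assms by (intro card_mono) (auto simp: graph_def)
  also have "\<dots> = card S choose 2" using assms(2) by (rule n_subsets)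
  finally show ?thesis using finE assms(2) by (simp add: sum_degree_eq_sum_card_inter)
qed

text \<open>The second bound is \<open>s(\<delta> - t) \<le> |E'| + s(s - 1)/2\<close>, stated without subtraction or division.\<close>
lemma light_vertices_degree_bounds:
  assumes "graph V E" and "E' \<subseteq> E" and "frac_vertex_cover V (E - E') f"
    and "S \<subseteq> {v\<in>V. f v < 1 - y}"
  defines "t \<equiv> card {w\<in>V. y < f w}"
  shows "card S * min_degree V E \<le> card S * t + 2 * card E'"
    and "2 * (card S * min_degree V E) + card S \<le> 2 * (card S * t) + 2 * card E' + card S * card S"
proof -
  have "min_degree V E \<le> t + degree E' v" if "v \<in> S" for v
  proof -
    have "min_degree V E \<le> degree E v"
      using assms(1,4) that by (auto simp: min_degree_def graph_def)
    also have "\<dots> = degree (E - E') v + degree E' v"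
      using assms(1,2) by (simp add: degree_diff_add graph_finite_edges)
    also have "degree (E - E') v \<le> t"
      unfolding t_def using assms(1,3,4) that
      by (intro degree_le_card_heavy) (auto intro: graph_subset_edges)
    finally show ?thesis by simp
  qed
  then have "(\<Sum>v\<in>S. min_degree V E) \<le> (\<Sum>v\<in>S. t + degree E' v)" by (rule sum_mono)
  then have removed: "card S * min_degree V E \<le> card S * t + (\<Sum>v\<in>S. degree E' v)"
    by (simp add: sum.distrib)
  have "graph V E'" using assms(1,2) by (rule graph_subset_edges)
  moreover have "finite S" using finite_subset[OF assms(4)] assms(1) by (simp add: graph_def)
  ultimately have "(\<Sum>v\<in>S. degree E' v) \<le> 2 * card E'"
    and "(\<Sum>v\<in>S. degree E' v) \<le> card E' + (card S choose 2)"
    by (rule sum_degree_le_twice_card_edges, rule sum_degree_le_card_edges_add_choose)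
  moreover have "2 * (card S choose 2) + card S = card S * card S"
    by (cases "card S") (simp_all add: choose_two)
  ultimately show "card S * min_degree V E \<le> card S * t + 2 * card E'"
    and "2 * (card S * min_degree V E) + card S \<le> 2 * (card S * t) + 2 * card E' + card S * card S"
    using removed by linarith+
qed

lemma light_heavy_count_arith:
  fixes s t k d :: int
  assumes "t < s" and "0 \<le> t" and "0 \<le> k" and "k < d"
    and "s * d \<le> s * t + 2 * k" and "2 * (s * d) + s \<le> 2 * (s * t) + 2 * k + s * s"
  shows "2 * d - 3 \<le> s + t \<and> (s + t = 2 * d - 3 \<longrightarrow> k = d - 1)"
proof -
  have sparse: "s * (d - t) \<le> 2 * k" and dense: "2 * s * (d - t) \<le> 2 * k + s * (s - 1)"
    using assms(5,6) by (simp_all add: algebra_simps)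
  have "1 \<le> t"
  proof (rule ccontr)
    assume "\<not> 1 \<le> t"
    then have "t = 0" using assms(2) by simp
    then have "s * d \<le> 2 * k" using sparse by simp
    then have "s < 2" using assms(3,4) mult_right_mono[of 2 s d] by linarith
    then have "s = 1" using assms(1) \<open>t = 0\<close> by simp
    then show False using dense assms(4) \<open>t = 0\<close> by simp
  qed
  show ?thesis
  proof (rule ccontr)
    assume fails: "\<not> ?thesis"
    then have "t + 2 \<le> d" using assms(1) by auto
    define excess where "excess = (t - 1) * (d - t - 2)"
    have "(t + 1) * (d - t) \<le> s * (d - t)"
      using \<open>t + 2 \<le> d\<close> assms(1) by (intro mult_right_mono) auto
    moreover have "(t + 1) * (d - t) = 2 * (d - 1) + excess"
      by (simp add: excess_def algebra_simps)
    moreover have "0 \<le> excess" using \<open>1 \<le> t\<close> \<open>t + 2 \<le> d\<close> by (simp add: excess_def)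
    ultimately have "k = d - 1" and "excess \<le> 0" using sparse assms(4) by auto
    then have "t + 3 \<le> d" using fails assms(1) by auto
    then have "t - 1 \<le> excess"
      using \<open>1 \<le> t\<close> mult_left_mono[of 1 "d - t - 2" "t - 1"] by (simp add: excess_def)
    then have "t = 1" using \<open>excess \<le> 0\<close> \<open>1 \<le> t\<close> by simp
    then have "s * (d - 1) \<le> 2 * (d - 1)" using sparse \<open>k = d - 1\<close> by simp
    then have "s \<le> 2" using \<open>t + 3 \<le> d\<close> \<open>t = 1\<close> mult_right_le_imp_le[of s "d - 1" 2] by simp
    then have "s = 2" using assms(1) \<open>t = 1\<close> by simp
    then show False using dense \<open>t = 1\<close> \<open>k = d - 1\<close> \<open>t + 3 \<le> d\<close> by simp
  qed
qed

theorem lemma25: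
  fixes V :: "'a set" and E :: "'a set set"
  assumes "graph V E" and "V \<noteq> {}"
    and "mu V E < min_degree V E"
  shows "int (card V) \<ge> 2 * int (min_degree V E) - 3
       \<and> (int (card V) = 2 * int (min_degree V E) - 3 \<longrightarrow> mu V E = min_degree V E - 1)"
proof -
  have "finite V" using assms(1) by (simp add: graph_def)
  obtain E' where E': "E' \<subseteq> E" "card E' = mu V E" "tau_star V (E - E') < card V / 2"
    using mu_witness[OF \<open>finite V\<close> assms(2)] by blast
  obtain f where f: "frac_vertex_cover V (E - E') f" "sum f V < card V / 2"
    using ex_frac_vertex_cover_sum_less[OF E'(3)] by blast
  obtain y :: real where "1/2 \<le> y"
    and light_gt_heavy: "card {v\<in>V. y < f v} < card {v\<in>V. f v < 1 - y}"
    using ex_threshold_light_gt_heavy[OF \<open>finite V\<close> f(2)] by blast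
  define S where "S = {v\<in>V. f v < 1 - y}"
  define t where "t = card {v\<in>V. y < f v}"
  have "card S * min_degree V E \<le> card S * t + 2 * mu V E"
    and "2 * (card S * min_degree V E) + card S \<le> 2 * (card S * t) + 2 * mu V E + card S * card S"
    using light_vertices_degree_bounds[OF assms(1) E'(1) f(1), of S y] E'(2)
    by (simp_all add: S_def t_def)
  then have "int (card S * min_degree V E) \<le> int (card S * t + 2 * mu V E)"
    and "int (2 * (card S * min_degree V E) + card S)
      \<le> int (2 * (card S * t) + 2 * mu V E + card S * card S)"
    by (simp_all only: of_nat_le_iff)
  then have "2 * int (min_degree V E) - 3 \<le> int (card S) + int t
    \<and> (int (card S) + int t = 2 * int (min_degree V E) - 3 \<longrightarrow> int (mu V E) = int (min_degree V E) - 1)"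
    using light_gt_heavy assms(3) by (intro light_heavy_count_arith) (simp_all add: S_def t_def)
  moreover have "card S + t \<le> card V"
    unfolding S_def t_def using \<open>finite V\<close> \<open>1/2 \<le> y\<close>
    by (subst card_Un_disjoint[symmetric]) (auto intro: card_mono)
  ultimately show ?thesis using assms(3) by auto
qed

end
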